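(* Let $C'$, $S$, $\widehat C$ be as in the context, and let $C'T'$ be a filling (with positive integer entries) of a Young diagram whose first column is $C'$. Let $\widehat C C'T'$ be the filling obtained by adjoining $\widehat C$ as a new first column on the left. If $(\widehat C,C')$ satisfies the Non-overlapping Condition, then \[ \mathrm{inv}(\widehat C C'T')=\mathrm{inv}(C'T')+\hat N . \]
   Context: A column is a finite sequence of entries listed top to bottom. $C'=(C'(1),\ldots,C'(c'))$ is a sequence of distinct positive integers and $S$ is a set of $c$ positive integers, $c\in\{c',c'+1\}$, such that with $s_1<\cdots<s_c$ the elements of $S$ and $t_1<\cdots<t_{c'}$ the entries of $C'$ sorted, $s_r\le t_r$ for $r\le c'$. The column $\widehat C$ of length $c$ is built as follows: every $x\in S\cap C'$ is placed in the row where $x$ occurs in $C'$; if $c=c'+1$, the largest element of $S\setminus C'$ is placed in row $c$; the remaining elements of $S\setminus C'$, in decreasing order, are placed in the rows occupied in $C'$ by the elements of $C'\setminus S$, in decreasing order (the $k$-th largest next to the $k$-th largest). (Since $c\ge c'$, $\widehat CC'T'$ is a filling of a Young diagram.) Pivots: row $r$ is a pivot row if either $r\le c'$ and $\widehat C(r)<C'(r)$, or $r=c'+1\le c$. With pivot rows $q_1,\ldots,q_p$, put $b_j=\widehat C(q_j)$, $d_j=C'(q_j)$ if $q_j\le c'$ and $d_j=\infty$ otherwise. Non-overlapping Condition: $p\le1$, or the intervals $[b_j,d_j]$ ($[b_j,\infty)$ if $d_j=\infty$) are pairwise disjoint. Define $\hat N=\sum_{j=1}^p\#\{r<q_j:\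 C'(r)\in S,\ b_j<C'(r)<d_j\}$. Inversion statistic of a filling $\sigma$ of a Young diagram (cells $(i,j)$, row $i$, column $j$, English convention): $\mathrm{inv}(\sigma)$ is the number of pairs of cells $(u,v)$ with $u=(j,k)$, $v=(i,k+1)$, $i<j$, such that $\sigma(u)<\sigma(v)<\sigma(w)$ where $w=(j,k+1)$ if this cell exists, and such that $\sigma(u)<\sigma(v)$ otherwise. *)

theory Defs
  imports Main
begin

text \<open>A column is a list of entries, listed top to bottom.
  A filling of a Young diagram is a list of columns (left to right);
  the entry in row r, column k (both 0-indexed) is F ! k ! r.
  (Rows/columns of the paper are 1-indexed; we shift by one.)\<close>

definition young_filling :: "nat list list \<Rightarrow> bool" where
  "young_filling F \<longleftrightarrow>
     (\<forall>col\<in>set F. col \<noteq> [] \<and> (\<forall>x\<in>set col. 0 < x)) \<and>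
     (\<forall>k. Suc k < length F \<longrightarrow> length (F ! Suc k) \<le> length (F ! k))"

text \<open>Inversion statistic: pairs u = (j,k), v = (i,k+1), i < j,
  with sigma(u) < sigma(v) < sigma(w) where w = (j,k+1) if this cell exists,
  and sigma(u) < sigma(v) otherwise.  Triples (j,i,k) below.\<close>

definition inv_fill :: "nat list list \<Rightarrow> nat" where
  "inv_fill F = card {(j, i, k). Suc k < length F \<and> i < j \<and>
       j < length (F ! k) \<and> i < length (F ! Suc k) \<and>
       (if j < length (F ! Suc k)
        then F ! k ! j < F ! Suc k ! i \<and> F ! Suc k ! i < F ! Suc k ! j
        else F ! k ! j < F ! Suc k ! i)}"

definition admissible :: "nat list \<Rightarrow> nat set \<Rightarrow> bool" where
  "admissible C' S \<longleftrightarrow>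
     distinct C' \<and> (\<forall>x\<in>set C'. 0 < x) \<and>
     finite S \<and> (\<forall>x\<in>S. 0 < x) \<and>
     (card S = length C' \<or> card S = Suc (length C')) \<and>
     (\<forall>r < length C'. sorted_list_of_set S ! r \<le> sort C' ! r)"

text \<open>For a row r with C'(r) not in S,
  the k-th largest element of C' \<setminus> S (k counted from 0, i.e. the number of
  elements of C' \<setminus> S larger than C'(r)) receives the k-th largest among the
  remaining elements of S \<setminus> C'.\<close>

definition hatC :: "nat list \<Rightarrow> nat set \<Rightarrow> nat list" where
  "hatC C' S =
     (let new = S - set C';
          extra = (card S = Suc (length C'));
          rest = (if extra then new - {Max new} else new);
          Es = rev (sorted_list_of_set rest)
      in map (\<lambda>r. if r < length C' then
                     (if C' ! r \<in> S then C' ! r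
                      else Es ! card {y \<in> set C' - S. C' ! r < y})
                   else Max new)
             [0..<card S])"

definition pivot :: "nat list \<Rightarrow> nat set \<Rightarrow> nat \<Rightarrow> bool" where
  "pivot C' S r \<longleftrightarrow>
     (r < length C' \<and> hatC C' S ! r < C' ! r) \<or>
     (r = length C' \<and> length C' < card S)"

definition pivot_interval :: "nat list \<Rightarrow> nat set \<Rightarrow> nat \<Rightarrow> nat set" where
  "pivot_interval C' S q =
     (if q < length C' then {hatC C' S ! q .. C' ! q} else {hatC C' S ! q ..})"

definition non_overlapping :: "nat list \<Rightarrow> nat set \<Rightarrow> bool" where
  "non_overlapping C' S \<longleftrightarrow>
     card {q. pivot C' S q} \<le> 1 \<or>
     (\<forall>q1 q2. pivot C' S q1 \<and> pivot C' S q2 \<and> q1 \<noteq> q2 \<longrightarrow>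
        pivot_interval C' S q1 \<inter> pivot_interval C' S q2 = {})"

definition Nhat :: "nat list \<Rightarrow> nat set \<Rightarrow> nat" where
  "Nhat C' S = (\<Sum>q \<in> {q. pivot C' S q}.
     card {r. r < q \<and> C' ! r \<in> S \<and> hatC C' S ! q < C' ! r \<and>
              (q < length C' \<longrightarrow> C' ! r < C' ! q)})"

end

theory Submission
  imports Defs
begin

text \<open>Adjoining \<open>\<widehat>C\<close> only adds the inversion pairs (j, i) between the columns
  \<open>\<widehat>C\<close> and C'. Such a pair forces j to be a pivot row. It also forces C'(i) \<in> S: otherwise
  \<open>\<widehat>C(i) < \<widehat>C(j)\<close>, since the entries filling the vacated rows of C' are placed
  order-preservingly and the entry in the extra row c is the largest of them; then
  \<open>\<widehat>C(i) < \<widehat>C(j) < C'(i)\<close> makes i a pivot row as well, and \<open>\<widehat>C(j)\<close> lies in both pivot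
  intervals, contradicting the Non-overlapping Condition. So the pairs with a given
  pivot row j are exactly the rows counted by the j-th summand of \<^const>\<open>Nhat\<close>.\<close>

definition column_inversions :: "nat list \<Rightarrow> nat list \<Rightarrow> (nat \<times> nat) set" where
  "column_inversions H C = {(j, i). i < j \<and> j < length H \<and> i < length C \<and>
     (if j < length C then H ! j < C ! i \<and> C ! i < C ! j else H ! j < C ! i)}"

definition inversion_triples :: "nat list list \<Rightarrow> (nat \<times> nat \<times> nat) set" where
  "inversion_triples F = {(j, i, k). Suc k < length F \<and> i < j \<and>
       j < length (F ! k) \<and> i < length (F ! Suc k) \<and>
       (if j < length (F ! Suc k)
        then F ! k ! j < F ! Suc k ! i \<and> F ! Suc k ! i < F ! Suc k ! j
        else F ! k ! j < F ! Suc k ! i)}"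

lemma finite_column_inversions: "finite (column_inversions H C)"
  by (rule finite_subset[of _ "{..<length H} \<times> {..<length C}"]) (auto simp: column_inversions_def)

lemma finite_inversion_triples: "finite (inversion_triples F)"
proof (rule finite_subset)
  show "inversion_triples F \<subseteq> (\<Union>k<length F. {..<length (F ! k)} \<times> {..<length (F ! k)} \<times> {k})"
    by (fastforce simp: inversion_triples_def)
qed auto

lemma zero_mem_inversion_triples_iff:
  "(j, i, 0) \<in> inversion_triples (H # C # T) \<longleftrightarrow> (j, i) \<in> column_inversions H C"
  by (simp add: inversion_triples_def column_inversions_def)

lemma Suc_mem_inversion_triples_iff:
  "(j, i, Suc k) \<in> inversion_triples (H # F) \<longleftrightarrow> (j, i, k) \<in> inversion_triples F"
  by (simp add: inversion_triples_def)

lemma inversion_triples_Cons_Cons: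
  "inversion_triples (H # C # T) =
     (\<lambda>(j, i). (j, i, 0)) ` column_inversions H C \<union>
     (\<lambda>(j, i, k). (j, i, Suc k)) ` inversion_triples (C # T)"
proof (rule set_eqI)
  fix x :: "nat \<times> nat \<times> nat"
  obtain j i k where x: "x = (j, i, k)"
    by (cases x) auto
  show "x \<in> inversion_triples (H # C # T) \<longleftrightarrow>
    x \<in> (\<lambda>(j, i). (j, i, 0)) ` column_inversions H C \<union>
      (\<lambda>(j, i, k). (j, i, Suc k)) ` inversion_triples (C # T)"
    unfolding x by (cases k) (force simp: zero_mem_inversion_triples_iff Suc_mem_inversion_triples_iff)+
qed

lemma inv_fill_Cons_Cons:
  "inv_fill (H # C # T) = card (column_inversions H C) + inv_fill (C # T)"
proof -
  have "inv_fill (H # C # T) = card (inversion_triples (H # C # T))"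
    by (simp add: inv_fill_def inversion_triples_def)
  also have "\<dots> = card ((\<lambda>(j, i). (j, i, 0::nat)) ` column_inversions H C) +
      card ((\<lambda>(j, i, k). (j, i, Suc k)) ` inversion_triples (C # T))"
    unfolding inversion_triples_Cons_Cons
    by (rule card_Un_disjoint) (auto simp: finite_column_inversions finite_inversion_triples)
  also have "\<dots> = card (column_inversions H C) + card (inversion_triples (C # T))"
    by (subst (1 2) card_image) (auto simp: inj_on_def)
  also have "card (inversion_triples (C # T)) = inv_fill (C # T)"
    by (simp add: inv_fill_def inversion_triples_def)
  finally show ?thesis .
qed

definition hatC_pool :: "nat list \<Rightarrow> nat set \<Rightarrow> nat set" where
  "hatC_pool C' S =
     (if card S = Suc (length C') then (S - set C') - {Max (S - set C')} else S - set C')"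

definition hatC_fillers :: "nat list \<Rightarrow> nat set \<Rightarrow> nat list" where
  "hatC_fillers C' S = rev (sorted_list_of_set (hatC_pool C' S))"

definition rank_outside :: "nat list \<Rightarrow> nat set \<Rightarrow> nat \<Rightarrow> nat" where
  "rank_outside C' S r = card {y \<in> set C' - S. C' ! r < y}"

lemma length_hatC: "length (hatC C' S) = card S"
  by (simp add: hatC_def Let_def)

lemma nth_hatC:
  "r < card S \<Longrightarrow> hatC C' S ! r =
     (if r < length C'
      then (if C' ! r \<in> S then C' ! r else hatC_fillers C' S ! rank_outside C' S r)
      else Max (S - set C'))"
  unfolding hatC_def Let_def hatC_pool_def[symmetric] hatC_fillers_def[symmetric]
    rank_outside_def[symmetric]
  by simp

lemma admissible_length_le: "admissible C' S \<Longrightarrow> length C' \<le> card S"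
  by (auto simp: admissible_def)

lemma hatC_nth_mem:
  "\<lbrakk>admissible C' S; r < length C'; C' ! r \<in> S\<rbrakk> \<Longrightarrow> hatC C' S ! r = C' ! r"
  using admissible_length_le[of C' S] by (simp add: nth_hatC)

lemma hatC_nth_not_mem:
  "\<lbrakk>admissible C' S; r < length C'; C' ! r \<notin> S\<rbrakk> \<Longrightarrow>
     hatC C' S ! r = hatC_fillers C' S ! rank_outside C' S r"
  using admissible_length_le[of C' S] by (simp add: nth_hatC)

lemma hatC_last:
  "card S = Suc (length C') \<Longrightarrow> hatC C' S ! length C' = Max (S - set C')"
  by (simp add: nth_hatC)

lemma card_hatC_pool:
  assumes "admissible C' S"
  shows "card (hatC_pool C' S) = card (set C' - S)"
proof -
  have "distinct C'" "finite S" and card_S: "card S = length C' \<or> card S = Suc (length C')"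
    using assms by (auto simp: admissible_def)
  then have card_new: "card (S - set C') = card S - card (set C' \<inter> S)"
    and card_old: "card (set C' - S) = length C' - card (set C' \<inter> S)"
    by (simp_all add: card_Diff_subset_Int distinct_card Int_commute)
  have "card (set C' \<inter> S) \<le> length C'"
    using card_mono[of "set C'" "set C' \<inter> S"] card_length[of C'] by auto
  show ?thesis
  proof (cases "card S = Suc (length C')")
    case True
    with card_new \<open>card (set C' \<inter> S) \<le> length C'\<close> have "card (S - set C') \<noteq> 0"
      by linarith
    then have "S - set C' \<noteq> {}"
      by (intro notI) simp
    with \<open>finite S\<close> have "Max (S - set C') \<in> S - set C'"
      by (intro Max_in) auto
    with True card_new card_old show ?thesis
      by (simp add: hatC_pool_def card_Diff_singleton)
  next
    case False
    with card_S card_new card_old show ?thesis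
      by (simp add: hatC_pool_def)
  qed
qed

lemma rank_outside_less:
  assumes "r < length C'" "C' ! r \<notin> S"
  shows "rank_outside C' S r < card (set C' - S)"
proof -
  have "C' ! r \<in> (set C' - S) - {y \<in> set C' - S. C' ! r < y}"
    using assms by simp
  then have "{y \<in> set C' - S. C' ! r < y} \<subset> set C' - S"
    by blast
  then show ?thesis
    unfolding rank_outside_def by (simp add: psubset_card_mono)
qed

lemma rank_outside_strict_antimono:
  assumes "r2 < length C'" "C' ! r2 \<notin> S" "C' ! r1 < C' ! r2"
  shows "rank_outside C' S r2 < rank_outside C' S r1"
proof -
  have "C' ! r2 \<in> {y \<in> set C' - S. C' ! r1 < y} - {y \<in> set C' - S. C' ! r2 < y}"
    using assms by simp
  moreover have "{y \<in> set C' - S. C' ! r2 < y} \<subseteq> {y \<in> set C' - S. C' ! r1 < y}"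
    using assms(3) by auto
  ultimately have "{y \<in> set C' - S. C' ! r2 < y} \<subset> {y \<in> set C' - S. C' ! r1 < y}"
    by blast
  then show ?thesis
    unfolding rank_outside_def by (simp add: psubset_card_mono)
qed

lemma hatC_fillers_strict_antimono:
  assumes "a < b" "b < length (hatC_fillers C' S)"
  shows "hatC_fillers C' S ! b < hatC_fillers C' S ! a"
proof -
  let ?L = "sorted_list_of_set (hatC_pool C' S)"
  have sorted: "sorted_wrt (<) ?L"
    by simp
  have "?L ! (length ?L - Suc b) < ?L ! (length ?L - Suc a)"
    using assms by (intro sorted_wrt_nth_less[OF sorted]) (auto simp: hatC_fillers_def)
  with assms show ?thesis
    by (simp add: hatC_fillers_def rev_nth)
qed

lemma length_hatC_fillers:
  "admissible C' S \<Longrightarrow> length (hatC_fillers C' S) = card (set C' - S)"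
  by (simp add: hatC_fillers_def card_hatC_pool)

lemma hatC_strict_mono_not_mem:
  assumes "admissible C' S" "r1 < length C'" "r2 < length C'" "C' ! r1 \<notin> S" "C' ! r2 \<notin> S"
    and "C' ! r1 < C' ! r2"
  shows "hatC C' S ! r1 < hatC C' S ! r2"
proof -
  have "rank_outside C' S r2 < rank_outside C' S r1"
    using assms(3,5,6) by (rule rank_outside_strict_antimono)
  moreover have "rank_outside C' S r1 < length (hatC_fillers C' S)"
    using assms(1,2,4) by (simp add: rank_outside_less length_hatC_fillers)
  ultimately show ?thesis
    using assms by (simp add: hatC_nth_not_mem hatC_fillers_strict_antimono)
qed

lemma hatC_nth_less_last:
  assumes "admissible C' S" "card S = Suc (length C')" "r < length C'" "C' ! r \<notin> S"
  shows "hatC C' S ! r < hatC C' S ! length C'"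
proof -
  have "finite S"
    using assms(1) by (simp add: admissible_def)
  have "hatC_fillers C' S ! rank_outside C' S r \<in> set (hatC_fillers C' S)"
    using assms(1,3,4) by (simp add: rank_outside_less length_hatC_fillers)
  then have "hatC C' S ! r \<in> (S - set C') - {Max (S - set C')}"
    using assms hatC_nth_not_mem \<open>finite S\<close> by (simp add: hatC_fillers_def hatC_pool_def)
  then show ?thesis
    using assms(2) \<open>finite S\<close> by (simp add: hatC_last order_neq_le_trans)
qed

lemma finite_pivots: "finite {q. pivot C' S q}"
  by (rule finite_subset[of _ "{..length C'}"]) (auto simp: pivot_def)

lemma hatC_mem_pivot_interval: "pivot C' S q \<Longrightarrow> hatC C' S ! q \<in> pivot_interval C' S q"
  by (auto simp: pivot_def pivot_interval_def)

lemma non_overlapping_pivot_intervals: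
  assumes "non_overlapping C' S" "pivot C' S a" "pivot C' S b" "a \<noteq> b"
  shows "pivot_interval C' S a \<inter> pivot_interval C' S b = {}"
proof -
  have "card {a, b} \<le> card {q. pivot C' S q}"
    using assms(2,3) by (intro card_mono finite_pivots) auto
  with assms(4) have "\<not> card {q. pivot C' S q} \<le> 1"
    by simp
  with assms show ?thesis
    unfolding non_overlapping_def by blast
qed

lemma pivot_of_column_inversion:
  assumes "admissible C' S" "(j, i) \<in> column_inversions (hatC C' S) C'"
  shows "pivot C' S j"
  using assms by (auto simp: admissible_def column_inversions_def length_hatC pivot_def)

lemma column_inversion_entry_mem:
  assumes adm: "admissible C' S" and no: "non_overlapping C' S"
    and inv: "(j, i) \<in> column_inversions (hatC C' S) C'"
  shows "C' ! i \<in> S"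
proof (rule ccontr)
  assume i_out: "C' ! i \<notin> S"
  have "i < j" "i < length C'" "j < card S" and below: "hatC C' S ! j < C' ! i"
    using inv by (auto simp: column_inversions_def length_hatC split: if_splits)
  have "hatC C' S ! i < hatC C' S ! j"
  proof (cases "j < length C'")
    case True
    with inv have "C' ! i < C' ! j"
      by (simp add: column_inversions_def)
    with below True adm have "C' ! j \<notin> S"
      using hatC_nth_mem by fastforce
    with adm True \<open>i < length C'\<close> i_out \<open>C' ! i < C' ! j\<close> show ?thesis
      by (simp add: hatC_strict_mono_not_mem)
  next
    case False
    with adm \<open>j < card S\<close> have "card S = Suc (length C')" "j = length C'"
      by (auto simp: admissible_def)
    with adm \<open>i < length C'\<close> i_out show ?thesis
      by (simp add: hatC_nth_less_last)
  qed
  with below \<open>i < length C'\<close> have "pivot C' S i" "hatC C' S ! j \<in> pivot_interval C' S i"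
    by (auto simp: pivot_def pivot_interval_def)
  moreover have "pivot C' S j"
    using adm inv by (rule pivot_of_column_inversion)
  ultimately show False
    using non_overlapping_pivot_intervals[OF no] hatC_mem_pivot_interval \<open>i < j\<close> by blast
qed

definition nhat_rows :: "nat list \<Rightarrow> nat set \<Rightarrow> nat \<Rightarrow> nat set" where
  "nhat_rows C' S q = {r. r < q \<and> C' ! r \<in> S \<and> hatC C' S ! q < C' ! r \<and>
     (q < length C' \<longrightarrow> C' ! r < C' ! q)}"

lemma column_inversions_hatC:
  assumes "admissible C' S" "non_overlapping C' S"
  shows "column_inversions (hatC C' S) C' = Sigma {q. pivot C' S q} (nhat_rows C' S)"
proof (rule set_eqI, clarify)
  fix j i
  show "(j, i) \<in> column_inversions (hatC C' S) C' \<longleftrightarrow>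
    (j, i) \<in> Sigma {q. pivot C' S q} (nhat_rows C' S)"
  proof
    assume inv: "(j, i) \<in> column_inversions (hatC C' S) C'"
    with assms have "C' ! i \<in> S" "pivot C' S j"
      by (simp_all add: column_inversion_entry_mem pivot_of_column_inversion)
    with inv show "(j, i) \<in> Sigma {q. pivot C' S q} (nhat_rows C' S)"
      by (auto simp: column_inversions_def nhat_rows_def split: if_splits)
  next
    assume "(j, i) \<in> Sigma {q. pivot C' S q} (nhat_rows C' S)"
    moreover have "pivot C' S j \<Longrightarrow> j < card S \<and> j \<le> length C'"
      using admissible_length_le[OF assms(1)] by (auto simp: pivot_def)
    ultimately show "(j, i) \<in> column_inversions (hatC C' S) C'"
      by (auto simp: column_inversions_def nhat_rows_def length_hatC)
  qed
qed

lemma card_column_inversions_hatC: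
  assumes "admissible C' S" "non_overlapping C' S"
  shows "card (column_inversions (hatC C' S) C') = Nhat C' S"
proof -
  have "finite (nhat_rows C' S q)" for q
    by (simp add: nhat_rows_def)
  then show ?thesis
    by (simp add: column_inversions_hatC[OF assms] finite_pivots Nhat_def nhat_rows_def)
qed

theorem lemma4p6:
  fixes C' :: "nat list" and S :: "nat set" and T' :: "nat list list"
  assumes "admissible C' S"
    and "young_filling (C' # T')"
    and "non_overlapping C' S"
  shows "inv_fill (hatC C' S # C' # T') = inv_fill (C' # T') + Nhat C' S"
  using card_column_inversions_hatC[OF assms(1,3)] by (simp add: inv_fill_Cons_Cons)

end
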